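(* There are no binary self-orthogonal codes with parameters $[45,6,22]$, $[53,6,26]$, $[60,6,30]$, $[47,7,22]$, $[71,7,34]$, $[79,7,38]$, $[93,7,46]$, $[102,7,50]$, $[109,7,54]$, $[117,7,58]$, or $[124,7,62]$.
   Context: A binary linear $[n,k,d]$ code $C$ is self-orthogonal if $C\subseteq C^\perp$ with respect to the standard inner product over $\mathbb{F}_2$. *)

theory Defs
  imports Complex_Main "HOL-Library.Z2" "HOL-Library.Function_Algebras"
begin

text \<open>Vectors over F_2 are functions nat => bit; the ambient space F_2^n is the set of
  such functions vanishing outside {0..<n}. Scalar multiplication is pointwise.\<close>

definition vscale :: "bit \<Rightarrow> (nat \<Rightarrow> bit) \<Rightarrow> (nat \<Rightarrow> bit)" where
  "vscale c v = (\<lambda>i. c * v i)"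

interpretation bv: vector_space vscale
  by unfold_locales (auto simp: vscale_def fun_eq_iff algebra_simps)

definition F2n :: "nat \<Rightarrow> (nat \<Rightarrow> bit) set" where
  "F2n n = {v. \<forall>i. n \<le> i \<longrightarrow> v i = 0}"

definition hamming_dist :: "nat \<Rightarrow> (nat \<Rightarrow> bit) \<Rightarrow> (nat \<Rightarrow> bit) \<Rightarrow> nat" where
  "hamming_dist n x y = card {i. i < n \<and> x i \<noteq> y i}"

definition min_dist :: "nat \<Rightarrow> (nat \<Rightarrow> bit) set \<Rightarrow> nat" where
  "min_dist n C = Min {hamming_dist n x y | x y. x \<in> C \<and> y \<in> C \<and> x \<noteq> y}"

definition binary_linear_code :: "nat \<Rightarrow> nat \<Rightarrow> nat \<Rightarrow> (nat \<Rightarrow> bit) set \<Rightarrow> bool" where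
  "binary_linear_code n k d C \<longleftrightarrow>
     C \<subseteq> F2n n \<and> bv.subspace C \<and> bv.dim C = k \<and> min_dist n C = d"

definition inner :: "nat \<Rightarrow> (nat \<Rightarrow> bit) \<Rightarrow> (nat \<Rightarrow> bit) \<Rightarrow> bit" where
  "inner n x y = (\<Sum>i<n. x i * y i)"

definition dual_code :: "nat \<Rightarrow> (nat \<Rightarrow> bit) set \<Rightarrow> (nat \<Rightarrow> bit) set" where
  "dual_code n C = {y \<in> F2n n. \<forall>x\<in>C. inner n x y = 0}"

definition self_orthogonal :: "nat \<Rightarrow> (nat \<Rightarrow> bit) set \<Rightarrow> bool" where
  "self_orthogonal n C \<longleftrightarrow> C \<subseteq> dual_code n C"

end

theory Submission
  imports Defs
begin

(* In a self-orthogonal binary code every weight is even and, since supports of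
   codewords meet evenly, wt (x + y) = wt x + wt y (mod 4).  Hence the doubly-even
   codewords form a subcode D, and when d = 2 (mod 4) a minimum-weight word lies outside
   it, so D has index 2: D is an [n, k - 1, >= d + 2] code.  For each listed parameter
   set this contradicts the Griesmer bound  n >= sum_{i < k - 1} ceil ((d + 2) / 2^i). *)

section \<open>Supports and weights\<close>

definition supp :: "nat \<Rightarrow> (nat \<Rightarrow> bit) \<Rightarrow> nat set" where
  "supp n x = {i. i < n \<and> x i \<noteq> 0}"

abbreviation weight :: "nat \<Rightarrow> (nat \<Rightarrow> bit) \<Rightarrow> nat" where
  "weight n x \<equiv> card (supp n x)"

lemma finite_supp [simp]: "finite (supp n x)"
  by (simp add: supp_def)

lemma supp_subset_lessThan: "supp n x \<subseteq> {..<n}"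
  by (auto simp: supp_def)

lemma bit_vec_add_self [simp]: "(x :: nat \<Rightarrow> bit) + x = 0"
  by (auto simp: fun_eq_iff plus_fun_def)

lemma bit_vec_add_add_self [simp]: "(x :: nat \<Rightarrow> bit) + y + y = x"
  by (simp add: add.assoc)

lemma bit_vec_add_eq_0_iff: "(x + y) i = 0 \<longleftrightarrow> x i = y i"
  for x y :: "nat \<Rightarrow> bit"
  by (cases "x i"; cases "y i") simp_all

lemma ceil_div_le_iff: "0 < b \<Longrightarrow> (a + b - 1) div b \<le> t \<longleftrightarrow> a \<le> t * b"
  for a b t :: nat
  using div_less_iff_less_mult[of b "a + b - 1" "Suc t"] by auto

lemma card_sym_diff:
  assumes "finite A" "finite B"
  shows "card (sym_diff A B) + 2 * card (A \<inter> B) = card A + card B"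
proof -
  have "card (sym_diff A B) = card (A - B) + card (B - A)"
    using assms by (intro card_Un_disjoint) auto
  then show ?thesis
    using card_Int_Diff[OF assms(1), of B] card_Int_Diff[OF assms(2), of A]
    by (simp add: Int_commute)
qed

lemma supp_add: "supp n (x + y) = sym_diff (supp n x) (supp n y)"
  using bit_vec_add_eq_0_iff[of x y] unfolding supp_def by (auto simp del: bit_not_zero_iff)

lemma weight_add:
  "weight n (x + y) + 2 * card (supp n x \<inter> supp n y) = weight n x + weight n y"
  unfolding supp_add by (rule card_sym_diff) simp_all

lemma hamming_dist_eq_weight: "hamming_dist n x y = weight n (x + y)"
  using bit_vec_add_eq_0_iff[of x y] unfolding hamming_dist_def supp_def
  by (auto simp del: bit_not_zero_iff)

lemma bit_of_nat_eq_0_iff [simp]: "(of_nat m :: bit) = 0 \<longleftrightarrow> even m"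
  by (induction m) auto

lemma inner_eq_0_iff: "inner n x y = 0 \<longleftrightarrow> even (card (supp n x \<inter> supp n y))"
proof -
  have "inner n x y = (\<Sum>i\<in>supp n x \<inter> supp n y. 1)"
    unfolding inner_def by (rule sum.mono_neutral_cong_right) (auto simp: supp_def)
  then show ?thesis
    by simp
qed

section \<open>Cardinality of binary subspaces\<close>

lemma card_Un_image_add:
  fixes D :: "(nat \<Rightarrow> bit) set"
  assumes "finite D" and add_closed: "\<And>x y. x \<in> D \<Longrightarrow> y \<in> D \<Longrightarrow> x + y \<in> D" and "c \<notin> D"
  shows "card (D \<union> (\<lambda>x. x + c) ` D) = 2 * card D"
proof -
  have "y + c \<notin> D" if "y \<in> D" for y
    using add_closed[OF that, of "y + c"] \<open>c \<notin> D\<close> by (auto simp flip: add.assoc)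
  then have "D \<inter> (\<lambda>x. x + c) ` D = {}"
    by blast
  moreover have "card ((\<lambda>x. x + c) ` D) = card D"
    by (rule card_image) (simp add: inj_on_def)
  ultimately show ?thesis
    using \<open>finite D\<close> by (simp add: card_Un_disjoint)
qed

lemma span_insert_eq_Un_image_add:
  "bv.span (insert b B) = bv.span B \<union> (\<lambda>x. x + b) ` bv.span B"
proof
  show "bv.span (insert b B) \<subseteq> bv.span B \<union> (\<lambda>x. x + b) ` bv.span B"
  proof
    fix x assume "x \<in> bv.span (insert b B)"
    then obtain c where c: "x - vscale c b \<in> bv.span B"
      using bv.span_breakdown_eq by blast
    show "x \<in> bv.span B \<union> (\<lambda>x. x + b) ` bv.span B"
    proof (cases c)
      case zero
      then show ?thesis
        using c by (simp add: vscale_def flip: zero_fun_def)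
    next
      case one
      then have "x + b \<in> bv.span B"
        using c by (simp add: vscale_def fun_diff_def plus_fun_def)
      then show ?thesis
        by (metis UnI2 bit_vec_add_add_self image_eqI)
    qed
  qed
  show "bv.span B \<union> (\<lambda>x. x + b) ` bv.span B \<subseteq> bv.span (insert b B)"
    using bv.span_mono[of B "insert b B"] bv.span_add bv.span_base[of b "insert b B"] by blast
qed

lemma card_span_independent:
  assumes "finite B" "bv.independent B"
  shows "card (bv.span B) = 2 ^ card B"
  using assms
proof (induction B rule: finite_induct)
  case empty
  then show ?case
    by simp
next
  case (insert b B)
  then have "b \<notin> bv.span B" "bv.independent B"
    using bv.independent_insert by auto
  moreover from this insert.IH have "finite (bv.span B)"
    by (intro card_ge_0_finite) simp
  ultimately show ?case
    using insert.IH insert.hyps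
    by (simp add: span_insert_eq_Un_image_add card_Un_image_add bv.span_add)
qed

lemma finite_F2n: "finite (F2n n)"
proof -
  have "(UNIV :: bit set) \<subseteq> {0, 1}"
    using bit.exhaust by blast
  then have "finite (UNIV :: bit set)"
    by (rule finite_subset) simp
  then have "finite {f :: nat \<Rightarrow> bit. \<forall>i. (i \<in> {..<n} \<longrightarrow> f i \<in> UNIV) \<and> (i \<notin> {..<n} \<longrightarrow> f i = 0)}"
    by (intro finite_set_of_finite_funs) simp_all
  then show ?thesis
    by (simp add: F2n_def not_less)
qed

lemma card_subspace_F2n:
  assumes "C \<subseteq> F2n n" "bv.subspace C"
  shows "card C = 2 ^ bv.dim C"
proof -
  obtain B where B: "B \<subseteq> C" "bv.independent B" "C \<subseteq> bv.span B" "card B = bv.dim C"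
    using bv.basis_exists by blast
  have "finite C"
    using assms(1) finite_F2n by (rule finite_subset)
  moreover have "bv.span B = C"
    using B bv.span_minimal[OF B(1) assms(2)] by blast
  ultimately show ?thesis
    using B card_span_independent finite_subset by metis
qed

section \<open>The Griesmer bound\<close>

lemma griesmer_greedy_step:
  fixes D U :: "(nat \<Rightarrow> bit) set"
  assumes add_closed: "\<And>x y. x \<in> D \<Longrightarrow> y \<in> D \<Longrightarrow> x + y \<in> D"
    and y: "y \<in> D - U"
    and y_min: "\<And>z. z \<in> D - U \<Longrightarrow> card (supp n y - S) \<le> card (supp n z - S)"
    and x: "x \<in> D - (U \<union> (\<lambda>u. u + y) ` U)"
  shows "card (supp n y - S) \<le> 2 * card (supp n x - (S \<union> supp n y))"
proof -
  have "x + y \<notin> U"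
  proof
    assume "x + y \<in> U"
    then have "x \<in> (\<lambda>u. u + y) ` U"
      by (metis bit_vec_add_add_self image_eqI)
    with x show False
      by blast
  qed
  then have xy: "x + y \<in> D - U"
    using x y add_closed by blast
  define A where "A = supp n x - S"
  define Y where "Y = supp n y - S"
  have supp_xy: "supp n (x + y) - S = sym_diff A Y"
    by (auto simp: A_def Y_def supp_add)
  have "card (sym_diff A Y) + 2 * card (A \<inter> Y) = card A + card Y"
    by (rule card_sym_diff) (simp_all add: A_def Y_def)
  moreover have "card A = card (A \<inter> Y) + card (A - Y)"
    by (rule card_Int_Diff) (simp add: A_def)
  moreover have "card Y \<le> card A"
    using y_min x by (simp add: A_def Y_def)
  moreover have "card Y \<le> card (sym_diff A Y)"
    using y_min[OF xy] supp_xy by (simp add: Y_def)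
  ultimately have "card Y \<le> 2 * card (A - Y)"
    by linarith
  moreover have "A - Y = supp n x - (S \<union> supp n y)"
    by (auto simp: A_def Y_def)
  ultimately show ?thesis
    by (simp add: Y_def)
qed

text \<open>After \<open>j\<close> rounds, \<open>S\<close> is the union of the supports of \<open>j\<close> chosen words and \<open>U\<close>,
  the set of sums of chosen words, is excluded.  The next word \<open>y \<notin> U\<close> is one with the
  fewest coordinates outside \<open>S\<close>; it adds at least \<open>\<lceil>\<delta> / 2^j\<rceil>\<close> coordinates to \<open>S\<close>, and
  by its minimality every word outside the enlarged \<open>U\<close> keeps at least half as many
  coordinates outside the enlarged \<open>S\<close>.\<close>

lemma griesmer_greedy:
  fixes D :: "(nat \<Rightarrow> bit) set"
  assumes "finite D"
    and add_closed: "\<And>x y. x \<in> D \<Longrightarrow> y \<in> D \<Longrightarrow> x + y \<in> D"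
    and card_D: "card D = 2 ^ m"
    and min_weight: "\<And>x. x \<in> D \<Longrightarrow> x \<noteq> 0 \<Longrightarrow> \<delta> \<le> weight n x"
  shows "j \<le> m \<Longrightarrow> \<exists>U S. finite U \<and> card U \<le> 2 ^ j \<and> S \<subseteq> {..<n} \<and>
           (\<Sum>i<j. (\<delta> + 2 ^ i - 1) div 2 ^ i) \<le> card S \<and>
           (\<forall>x\<in>D - U. \<delta> \<le> 2 ^ j * card (supp n x - S))"
proof (induction j)
  case 0
  show ?case
    by (intro exI[of _ "{0}"] exI[of _ "{}"]) (use min_weight in auto)
next
  case (Suc j)
  then obtain U S where U: "finite U" "card U \<le> 2 ^ j" and S: "S \<subseteq> {..<n}"
    and sum_S: "(\<Sum>i<j. (\<delta> + 2 ^ i - 1) div 2 ^ i) \<le> card S"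
    and inv: "\<forall>x\<in>D - U. \<delta> \<le> 2 ^ j * card (supp n x - S)"
    by (auto dest: Suc_leD)
  have "(2 :: nat) ^ j < 2 ^ m"
    using Suc.prems by (simp add: power_strict_increasing)
  then have "card U < card D"
    using U(2) card_D by linarith
  then have "D - U \<noteq> {}"
    using card_mono[OF U(1)] by (metis Diff_eq_empty_iff not_le)
  then obtain y where y: "y \<in> D - U"
    and y_min: "\<And>z. z \<in> D - U \<Longrightarrow> card (supp n y - S) \<le> card (supp n z - S)"
    using ex_has_least_nat[of "\<lambda>y. y \<in> D - U" _ "\<lambda>y. card (supp n y - S)"] by blast
  define t where "t = card (supp n y - S)"
  have t: "\<delta> \<le> 2 ^ j * t"
    using inv y by (simp add: t_def)
  show ?case
  proof (intro exI conjI)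
    show "finite (U \<union> (\<lambda>u. u + y) ` U)"
      using U(1) by simp
    have "card (U \<union> (\<lambda>u. u + y) ` U) \<le> card U + card ((\<lambda>u. u + y) ` U)"
      by (rule card_Un_le)
    also have "\<dots> \<le> 2 * card U"
      using card_image_le[OF U(1), of "\<lambda>u. u + y"] by simp
    finally show "card (U \<union> (\<lambda>u. u + y) ` U) \<le> 2 ^ Suc j"
      using U(2) by simp
    show "S \<union> supp n y \<subseteq> {..<n}"
      using S supp_subset_lessThan by blast
    have "card (S \<union> supp n y) = card (S \<union> (supp n y - S))"
      by simp
    also have "\<dots> = card S + t"
      unfolding t_def using finite_subset[OF S] by (intro card_Un_disjoint) auto
    finally have "card (S \<union> supp n y) = card S + t" .
    moreover have "(\<delta> + 2 ^ j - 1) div 2 ^ j \<le> t"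
      using t ceil_div_le_iff[of "2 ^ j" \<delta> t] by (simp add: mult.commute)
    ultimately show "(\<Sum>i<Suc j. (\<delta> + 2 ^ i - 1) div 2 ^ i) \<le> card (S \<union> supp n y)"
      using sum_S by simp
    show "\<forall>x\<in>D - (U \<union> (\<lambda>u. u + y) ` U). \<delta> \<le> 2 ^ Suc j * card (supp n x - (S \<union> supp n y))"
    proof
      fix x assume "x \<in> D - (U \<union> (\<lambda>u. u + y) ` U)"
      then have "t \<le> 2 * card (supp n x - (S \<union> supp n y))"
        unfolding t_def using griesmer_greedy_step add_closed y y_min by blast
      then have "2 ^ j * t \<le> 2 ^ Suc j * card (supp n x - (S \<union> supp n y))"
        by simp
      then show "\<delta> \<le> 2 ^ Suc j * card (supp n x - (S \<union> supp n y))"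
        using t by linarith
    qed
  qed
qed

theorem griesmer_bound:
  fixes D :: "(nat \<Rightarrow> bit) set"
  assumes "finite D"
    and "\<And>x y. x \<in> D \<Longrightarrow> y \<in> D \<Longrightarrow> x + y \<in> D"
    and "card D = 2 ^ m"
    and "\<And>x. x \<in> D \<Longrightarrow> x \<noteq> 0 \<Longrightarrow> \<delta> \<le> weight n x"
  shows "(\<Sum>i<m. (\<delta> + 2 ^ i - 1) div 2 ^ i) \<le> n"
proof -
  obtain S where "S \<subseteq> {..<n}" "(\<Sum>i<m. (\<delta> + 2 ^ i - 1) div 2 ^ i) \<le> card S"
    using griesmer_greedy[OF assms order.refl] by blast
  then show ?thesis
    using card_mono[of "{..<n}" S] by simp
qed

section \<open>Self-orthogonal codes\<close>

lemma finite_distances: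
  "finite C \<Longrightarrow> finite {hamming_dist n x y | x y. x \<in> C \<and> y \<in> C \<and> x \<noteq> y}"
  by (rule finite_subset[of _ "(\<lambda>(x, y). hamming_dist n x y) ` (C \<times> C)"]) auto

lemma min_dist_le_weight:
  assumes "finite C" "bv.subspace C" "x \<in> C" "x \<noteq> 0"
  shows "min_dist n C \<le> weight n x"
proof -
  have "hamming_dist n x 0 \<in> {hamming_dist n x y | x y. x \<in> C \<and> y \<in> C \<and> x \<noteq> y}"
    using assms(3,4) bv.subspace_0[OF assms(2)] by blast
  then show ?thesis
    unfolding min_dist_def hamming_dist_eq_weight[of n x 0]
    using finite_distances[OF assms(1)] by (simp add: Min_le)
qed

lemma min_dist_attained:
  assumes "finite C" "bv.subspace C" "x \<in> C" "x \<noteq> 0"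
  obtains c where "c \<in> C" "weight n c = min_dist n C"
proof -
  have "hamming_dist n x 0 \<in> {hamming_dist n x y | x y. x \<in> C \<and> y \<in> C \<and> x \<noteq> y}"
    using assms(3,4) bv.subspace_0[OF assms(2)] by blast
  then have "min_dist n C \<in> {hamming_dist n x y | x y. x \<in> C \<and> y \<in> C \<and> x \<noteq> y}"
    unfolding min_dist_def using finite_distances[OF assms(1)] by (intro Min_in) auto
  then obtain a b where "a \<in> C" "b \<in> C" "min_dist n C = weight n (a + b)"
    by (auto simp: hamming_dist_eq_weight)
  moreover from this have "a + b \<in> C"
    by (intro bv.subspace_add[OF assms(2)])
  ultimately show ?thesis
    using that[of "a + b"] by simp
qed

lemma self_orthogonal_even_Int:
  assumes "self_orthogonal n C" "x \<in> C" "y \<in> C"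
  shows "even (card (supp n x \<inter> supp n y))"
proof -
  have "inner n x y = 0"
    using assms unfolding self_orthogonal_def dual_code_def by blast
  then show ?thesis
    by (simp add: inner_eq_0_iff)
qed

lemma self_orthogonal_even_weight:
  assumes "self_orthogonal n C" "x \<in> C"
  shows "even (weight n x)"
  using self_orthogonal_even_Int[OF assms assms(2)] by simp

lemma self_orthogonal_weight_add_mod4:
  assumes "self_orthogonal n C" "x \<in> C" "y \<in> C"
  shows "weight n (x + y) mod 4 = (weight n x + weight n y) mod 4"
proof -
  obtain m where "card (supp n x \<inter> supp n y) = 2 * m"
    using self_orthogonal_even_Int[OF assms] by blast
  then have "weight n x + weight n y = weight n (x + y) + 4 * m"
    using weight_add[of n x y] by simp
  then show ?thesis
    by simp
qed

definition doubly_even_subcode :: "nat \<Rightarrow> (nat \<Rightarrow> bit) set \<Rightarrow> (nat \<Rightarrow> bit) set" where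
  "doubly_even_subcode n C = {x \<in> C. 4 dvd weight n x}"

lemma doubly_even_subcode_add:
  assumes "bv.subspace C" "self_orthogonal n C"
    and "x \<in> doubly_even_subcode n C" "y \<in> doubly_even_subcode n C"
  shows "x + y \<in> doubly_even_subcode n C"
proof -
  have x: "x \<in> C" "4 dvd weight n x" and y: "y \<in> C" "4 dvd weight n y"
    using assms(3,4) by (simp_all add: doubly_even_subcode_def)
  then have "4 dvd weight n (x + y)"
    using dvd_add[OF x(2) y(2)] self_orthogonal_weight_add_mod4[OF assms(2) x(1) y(1)]
    by (simp add: dvd_eq_mod_eq_0)
  with x(1) y(1) show ?thesis
    using bv.subspace_add[OF assms(1)] by (simp add: doubly_even_subcode_def)
qed

lemma card_doubly_even_subcode:
  assumes "finite C" "bv.subspace C" "self_orthogonal n C"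
    and c: "c \<in> C" "weight n c mod 4 = 2"
  shows "card C = 2 * card (doubly_even_subcode n C)"
proof -
  let ?D = "doubly_even_subcode n C"
  have "C \<subseteq> ?D \<union> (\<lambda>x. x + c) ` ?D"
  proof
    fix x assume x: "x \<in> C"
    show "x \<in> ?D \<union> (\<lambda>x. x + c) ` ?D"
    proof (cases "x \<in> ?D")
      case False
      moreover have "even (weight n x)"
        by (rule self_orthogonal_even_weight[OF assms(3) x])
      ultimately have "weight n x mod 4 = 2"
        using x by (auto simp: doubly_even_subcode_def elim!: evenE) presburger
      then have "weight n (x + c) mod 4 = 0"
        using self_orthogonal_weight_add_mod4[OF assms(3) x c(1)] c(2) by (simp flip: mod_add_eq)
      then have "x + c \<in> ?D"
        using bv.subspace_add[OF assms(2) x c(1)] by (simp add: doubly_even_subcode_def dvd_eq_mod_eq_0)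
      then show ?thesis
        by (metis UnI2 bit_vec_add_add_self image_eqI)
    qed simp
  qed
  moreover have "?D \<union> (\<lambda>x. x + c) ` ?D \<subseteq> C"
    using c(1) bv.subspace_add[OF assms(2)] by (auto simp: doubly_even_subcode_def)
  ultimately have "card C = card (?D \<union> (\<lambda>x. x + c) ` ?D)"
    by (simp add: subset_antisym)
  also have "\<dots> = 2 * card ?D"
  proof (rule card_Un_image_add)
    show "finite ?D"
      using assms(1) by (simp add: doubly_even_subcode_def)
    show "c \<notin> ?D"
      using c(2) by (auto simp: doubly_even_subcode_def)
  qed (rule doubly_even_subcode_add[OF assms(2,3)])
  finally show ?thesis .
qed

lemma self_orthogonal_code_griesmer:
  assumes code: "binary_linear_code n k d C" and so: "self_orthogonal n C"
    and d: "d mod 4 = 2" and k: "1 \<le> k"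
  shows "(\<Sum>i<k - 1. (d + 2 + 2 ^ i - 1) div 2 ^ i) \<le> n"
proof -
  have C: "C \<subseteq> F2n n" "bv.subspace C" and "bv.dim C = k" "min_dist n C = d"
    using code unfolding binary_linear_code_def by auto
  have fin: "finite C"
    using C(1) finite_F2n by (rule finite_subset)
  have card_C: "card C = 2 ^ k"
    using card_subspace_F2n[OF C] \<open>bv.dim C = k\<close> by simp
  have "\<not> C \<subseteq> {0}"
  proof
    assume "C \<subseteq> {0}"
    then have "card C \<le> 1"
      using card_mono[of "{0}" C] by simp
    with k card_C show False
      using power_increasing[of 1 k "2 :: nat"] by simp
  qed
  then obtain a where "a \<in> C" "a \<noteq> 0"
    by blast
  then obtain c where c: "c \<in> C" "weight n c = d"
    using min_dist_attained[OF fin C(2)] \<open>min_dist n C = d\<close> by metis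
  let ?D = "doubly_even_subcode n C"
  have "card C = 2 * card ?D"
    using card_doubly_even_subcode[OF fin C(2) so c(1)] c(2) d by simp
  with card_C k have card_D: "card ?D = 2 ^ (k - 1)"
    by (cases k) simp_all
  have "finite ?D"
    using fin by (simp add: doubly_even_subcode_def)
  moreover note doubly_even_subcode_add[OF C(2) so] card_D
  moreover have "d + 2 \<le> weight n x" if "x \<in> ?D" "x \<noteq> 0" for x
  proof -
    have "d \<le> weight n x" "4 dvd weight n x"
      using that min_dist_le_weight[OF fin C(2)] \<open>min_dist n C = d\<close>
      by (auto simp: doubly_even_subcode_def)
    with d show ?thesis
      by presburger
  qed
  ultimately show ?thesis
    by (rule griesmer_bound)
qed

theorem proposition6p1:
  shows "\<forall>(n, k, d) \<in> set [(45,6,22), (53,6,26), (60,6,30), (47,7,22), (71,7,34), (79,7,38),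
            (93,7,46), (102,7,50), (109,7,54), (117,7,58), (124,7,62)].
          \<not> (\<exists>C. binary_linear_code n k d C \<and> self_orthogonal n C)"
proof -
  have "\<not> (\<exists>C. binary_linear_code n k d C \<and> self_orthogonal n C)"
    if "d mod 4 = 2" "1 \<le> k" "n < (\<Sum>i<k - 1. (d + 2 + 2 ^ i - 1) div 2 ^ i)" for n k d :: nat
    using self_orthogonal_code_griesmer that by (meson leD)
  then show ?thesis
    by (simp del: not_ex add: lessThan_nat_numeral)
qed

end
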